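(* Let $\mathcal A=(Q,\Sigma,\delta,\rho)$ be a connected bireversible Mealy automaton whose labeled orbit tree $\mathfrak t(\mathcal A)$ has no active self-liftable branch, and let $\mathfrak j$ be a jungle tree with trunk of length $n$. For a $\mathfrak j$-word $\mathbf u$ with $|\mathbf u|<n$, the number of $\sim$-classes of stems containing a stem with prefix $\mathbf u$ depends only on $|\mathbf u|$: any two $\mathfrak j$-words of the same length $<n$ have the same number of such classes.
   Context: Mealy automata. A Mealy automaton is $\mathcal A=(Q,\Sigma,\delta,\rho)$ with $Q,\Sigma$ finite non-empty sets, $\delta=(\delta_i\colon Q\to Q)_{i\in\Sigma}$, $\rho=(\rho_x\colon\Sigma\to\Sigma)_{x\in Q}$; transitions $x\xrightarrow{i\mid\rho_x(i)}\delta_i(x)$. Invertible: each $\rho_x$ a permutation of $\Sigma$; reversible: each $\delta_i$ a permutation of $Q$; bireversible: invertible, reversible, and for each $j\in\Sigma$ the map $x\mapsto\delta_{\rho_x^{-1}(j)}(x)$ is a permutation of $Q$. Connected: the directed graph on $Q$ with edges $x\to\delta_i(x)$ is connected. Extensions: $\rho_x(i\mathbf s)=\rho_x(i)\rho_{\delta_i(x)}(\mathbf s)$; $\rho_{x_1\cdots x_m}=\rho_{x_m}\circ\cdots\circ\rho_{x_1}$; $\delta_i(x\mathbf u)=\delta_i(x)\delta_{\rho_x(i)}(\mathbf u)$ on $Q^*$, $\delta_{i_1\cdots i_m}=\delta_{i_m}\circ\cdots\circ\delta_{i_1}$. The connected components of $\mathcal A^n$ (stateset $Q^n$, transitions $\mathbf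 u\xrightarrow{i\mid\rho_{\mathbf u}(i)}\delta_i(\mathbf u)$) are, for reversible $\mathcal A$, the orbits of $Q^n$ under the maps $\delta_{\mathbf s}$. Orbit tree $\mathfrak t(\mathcal A)$: vertices at level $n\ge0$ are the connected components of $\mathcal A^n$; an edge from the component of $\mathbf u\in Q^n$ to that of $\mathbf ux$ for all $\mathbf u,x$; edge $C\to D$ labeled $\#D/\#C$. $\top,\bot$ = first/last vertex of a downward path; level of an edge/path = level of its top vertex. A word of $Q^*\cup Q^\omega$ represents the initial path through the components of its prefixes. Edge $e$ is liftable to $f$ if every word of $\bot(e)$ has a suffix in $\bot(f)$; paths are liftable if corresponding edges are. $f$ is a legitimate child of $e$ if $\top(f)=\bot(e)$ and $f$ is liftable to $e$. A path/subtree $\mathfrak s$ is $k$-self-liftable if for all $i\ge0$ every path in $\mathfrak s$ starting at level $i+k$ is liftable to a path in $\mathfrak s$ starting at level $i$; self-liftable if $k$-self-liftable for some $k>0$. A branch (infinite initial path) is active if its labels are not eventually all $1$. Jungle trees: for a finite 1-self-liftable initial path $\mathbf e$ of length $n$ whose last edge has at least two legitimate children, all labeled $1$, $\mathfrak j(\mathbf e)$ consists of $\mathbf e$ plus all edges descending from $\bot(\mathbf e)$ that are liftable to the last edge of $\mathbf e$. Stems: the words of $\bot(\mathbf e)\subseteq Q^n$. A $\mathfrak j$-word is a word representing an initial path of $\mathfrak j$. For stems $\mathbf u,\mathbf v$: $\mathbf u\sim\mathbf v$ iff there is $\mathbf s\in Q^*$ such that $\mathbf{usv}$ is a $\mathfrak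 j$-word and $\rho_{\mathbf{us}}$ is the identity of $\Sigma^*$; $\sim$ is an equivalence relation. *)

theory Defs
  imports Complex_Main "HOL-Library.Sublist"
begin

text \<open>A Mealy automaton with stateset the finite type 'q and alphabet the finite type 'a
  is given by delta :: 'a => 'q => 'q (delta i x = target of the transition from x
  reading i) and rho :: 'q => 'a => 'a (rho x i = output).\<close>

definition invertible :: "('q \<Rightarrow> 'a \<Rightarrow> 'a) \<Rightarrow> bool" where
  "invertible rho \<longleftrightarrow> (\<forall>x. bij (rho x))"

definition reversible :: "('a \<Rightarrow> 'q \<Rightarrow> 'q) \<Rightarrow> bool" where
  "reversible delta \<longleftrightarrow> (\<forall>i. bij (delta i))"

definition bireversible :: "('a \<Rightarrow> 'q \<Rightarrow> 'q) \<Rightarrow> ('q \<Rightarrow> 'a \<Rightarrow> 'a) \<Rightarrow> bool" where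
  "bireversible delta rho \<longleftrightarrow> invertible rho \<and> reversible delta \<and>
     (\<forall>j. bij (\<lambda>x. delta (inv (rho x) j) x))"

definition connected_aut :: "('a \<Rightarrow> 'q \<Rightarrow> 'q) \<Rightarrow> bool" where
  "connected_aut delta \<longleftrightarrow>
     (let E = {(x, delta i x) | x i. True} in \<forall>x y. (x, y) \<in> (E \<union> E\<inverse>)\<^sup>*)"

fun rhoS :: "('a \<Rightarrow> 'q \<Rightarrow> 'q) \<Rightarrow> ('q \<Rightarrow> 'a \<Rightarrow> 'a) \<Rightarrow> 'q \<Rightarrow> 'a list \<Rightarrow> 'a list" where
  "rhoS delta rho x [] = []"
| "rhoS delta rho x (i # s) = rho x i # rhoS delta rho (delta i x) s"

fun rhoQ :: "('a \<Rightarrow> 'q \<Rightarrow> 'q) \<Rightarrow> ('q \<Rightarrow> 'a \<Rightarrow> 'a) \<Rightarrow> 'q list \<Rightarrow> 'a list \<Rightarrow> 'a list" where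
  "rhoQ delta rho [] = id"
| "rhoQ delta rho (x # u) = rhoQ delta rho u \<circ> rhoS delta rho x"

fun deltaQ :: "('a \<Rightarrow> 'q \<Rightarrow> 'q) \<Rightarrow> ('q \<Rightarrow> 'a \<Rightarrow> 'a) \<Rightarrow> 'a \<Rightarrow> 'q list \<Rightarrow> 'q list" where
  "deltaQ delta rho i [] = []"
| "deltaQ delta rho i (x # u) = delta i x # deltaQ delta rho (rho x i) u"

definition comp :: "('a \<Rightarrow> 'q \<Rightarrow> 'q) \<Rightarrow> ('q \<Rightarrow> 'a \<Rightarrow> 'a) \<Rightarrow> 'q list \<Rightarrow> 'q list set" where
  "comp delta rho u =
     (let E = {(v, deltaQ delta rho i v) | v i. True} in {w. (u, w) \<in> (E \<union> E\<inverse>)\<^sup>*})"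

text \<open>Edges of the orbit tree: pairs (top, bottom) of components.\<close>
type_synonym 'q edge = "'q list set \<times> 'q list set"

definition tree_edge :: "('a \<Rightarrow> 'q \<Rightarrow> 'q) \<Rightarrow> ('q \<Rightarrow> 'a \<Rightarrow> 'a) \<Rightarrow> 'q edge \<Rightarrow> bool" where
  "tree_edge delta rho e \<longleftrightarrow>
     (\<exists>u x. e = (comp delta rho u, comp delta rho (u @ [x])))"

definition label :: "'q edge \<Rightarrow> real" where
  "label e = real (card (snd e)) / real (card (fst e))"

text \<open>Level of a vertex (all its words have the same length).\<close>
definition vlevel :: "'q list set \<Rightarrow> nat" where
  "vlevel C = length (SOME u. u \<in> C)"

definition edge_liftable :: "'q edge \<Rightarrow> 'q edge \<Rightarrow> bool" where
  "edge_liftable e f \<longleftrightarrow> (\<forall>w \<in> snd e. \<exists>w'. suffix w' w \<and> w' \<in> snd f)"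

definition path_liftable :: "'q edge list \<Rightarrow> 'q edge list \<Rightarrow> bool" where
  "path_liftable p p' \<longleftrightarrow> length p = length p' \<and>
     (\<forall>j < length p. edge_liftable (p ! j) (p' ! j))"

definition path_in :: "('a \<Rightarrow> 'q \<Rightarrow> 'q) \<Rightarrow> ('q \<Rightarrow> 'a \<Rightarrow> 'a) \<Rightarrow> 'q edge set \<Rightarrow> nat
    \<Rightarrow> 'q edge list \<Rightarrow> bool" where
  "path_in delta rho S i p \<longleftrightarrow> p \<noteq> [] \<and> set p \<subseteq> S \<and>
     (\<forall>e \<in> set p. tree_edge delta rho e) \<and>
     (\<forall>j. Suc j < length p \<longrightarrow> snd (p ! j) = fst (p ! Suc j)) \<and>
     vlevel (fst (hd p)) = i"

definition self_liftable_k :: "('a \<Rightarrow> 'q \<Rightarrow> 'q) \<Rightarrow> ('q \<Rightarrow> 'a \<Rightarrow> 'a) \<Rightarrow> nat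
    \<Rightarrow> 'q edge set \<Rightarrow> bool" where
  "self_liftable_k delta rho k S \<longleftrightarrow>
     (\<forall>i p. path_in delta rho S (i + k) p \<longrightarrow>
        (\<exists>p'. path_in delta rho S i p' \<and> path_liftable p p'))"

definition self_liftable :: "('a \<Rightarrow> 'q \<Rightarrow> 'q) \<Rightarrow> ('q \<Rightarrow> 'a \<Rightarrow> 'a)
    \<Rightarrow> 'q edge set \<Rightarrow> bool" where
  "self_liftable delta rho S \<longleftrightarrow> (\<exists>k > 0. self_liftable_k delta rho k S)"

definition branch :: "('a \<Rightarrow> 'q \<Rightarrow> 'q) \<Rightarrow> ('q \<Rightarrow> 'a \<Rightarrow> 'a) \<Rightarrow> (nat \<Rightarrow> 'q edge) \<Rightarrow> bool" where
  "branch delta rho b \<longleftrightarrow> fst (b 0) = {[]} \<and> (\<forall>m. tree_edge delta rho (b m)) \<and>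
     (\<forall>m. snd (b m) = fst (b (Suc m)))"

definition active :: "(nat \<Rightarrow> 'q edge) \<Rightarrow> bool" where
  "active b \<longleftrightarrow> (\<forall>N. \<exists>m \<ge> N. label (b m) \<noteq> 1)"

definition no_active_self_liftable_branch :: "('a \<Rightarrow> 'q \<Rightarrow> 'q) \<Rightarrow> ('q \<Rightarrow> 'a \<Rightarrow> 'a) \<Rightarrow> bool" where
  "no_active_self_liftable_branch delta rho \<longleftrightarrow>
     \<not> (\<exists>b. branch delta rho b \<and> active b \<and> self_liftable delta rho (range b))"

definition initial_path :: "('a \<Rightarrow> 'q \<Rightarrow> 'q) \<Rightarrow> ('q \<Rightarrow> 'a \<Rightarrow> 'a) \<Rightarrow> 'q edge list \<Rightarrow> bool" where
  "initial_path delta rho p \<longleftrightarrow> path_in delta rho UNIV 0 p \<and> fst (hd p) = {[]}"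

definition legit_child :: "('a \<Rightarrow> 'q \<Rightarrow> 'q) \<Rightarrow> ('q \<Rightarrow> 'a \<Rightarrow> 'a) \<Rightarrow> 'q edge \<Rightarrow> 'q edge \<Rightarrow> bool" where
  "legit_child delta rho e f \<longleftrightarrow> tree_edge delta rho f \<and> fst f = snd e \<and> edge_liftable f e"

definition jungle_trunk :: "('a \<Rightarrow> 'q \<Rightarrow> 'q) \<Rightarrow> ('q \<Rightarrow> 'a \<Rightarrow> 'a) \<Rightarrow> 'q edge list \<Rightarrow> nat \<Rightarrow> bool" where
  "jungle_trunk delta rho e n \<longleftrightarrow> length e = n \<and> initial_path delta rho e \<and>
     self_liftable_k delta rho 1 (set e) \<and>
     (\<exists>f g. f \<noteq> g \<and> legit_child delta rho (last e) f \<and> legit_child delta rho (last e) g) \<and>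
     (\<forall>f. legit_child delta rho (last e) f \<longrightarrow> label f = 1)"

definition jungle_edges :: "('a \<Rightarrow> 'q \<Rightarrow> 'q) \<Rightarrow> ('q \<Rightarrow> 'a \<Rightarrow> 'a) \<Rightarrow> 'q edge list \<Rightarrow> 'q edge set" where
  "jungle_edges delta rho e = set e \<union>
     {f. tree_edge delta rho f \<and> (\<exists>w \<in> fst f. \<exists>v \<in> snd (last e). prefix v w) \<and>
         edge_liftable f (last e)}"

definition jword :: "('a \<Rightarrow> 'q \<Rightarrow> 'q) \<Rightarrow> ('q \<Rightarrow> 'a \<Rightarrow> 'a) \<Rightarrow> 'q edge list \<Rightarrow> 'q list \<Rightarrow> bool" where
  "jword delta rho e w \<longleftrightarrow>
     (\<forall>k < length w. (comp delta rho (take k w), comp delta rho (take (Suc k) w))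
                        \<in> jungle_edges delta rho e)"

definition stems :: "'q edge list \<Rightarrow> 'q list set" where
  "stems e = snd (last e)"

definition stem_sim :: "('a \<Rightarrow> 'q \<Rightarrow> 'q) \<Rightarrow> ('q \<Rightarrow> 'a \<Rightarrow> 'a) \<Rightarrow> 'q edge list \<Rightarrow> 'q list rel" where
  "stem_sim delta rho e = {(u, v). u \<in> stems e \<and> v \<in> stems e \<and>
     (\<exists>s. jword delta rho e (u @ s @ v) \<and> (\<forall>t. rhoQ delta rho (u @ s) t = t))}"

definition num_classes :: "('a \<Rightarrow> 'q \<Rightarrow> 'q) \<Rightarrow> ('q \<Rightarrow> 'a \<Rightarrow> 'a) \<Rightarrow> 'q edge list \<Rightarrow> 'q list \<Rightarrow> nat" where
  "num_classes delta rho e u =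
     card {K \<in> stems e // stem_sim delta rho e. \<exists>w \<in> K. prefix u w}"

end

theory Submission
  imports Defs
begin

text \<open>Two \<open>\<mathfrak>j\<close>-words of the same length below the trunk length both run along the trunk,
  so they lie in one vertex of the orbit tree, i.e.\ in one orbit of the maps \<open>\<delta>\<^sub>i\<close>. It therefore
  suffices that each \<open>\<delta>\<^sub>i\<close> leaves the number of classes unchanged. Since the stems form a
  component, \<open>\<delta>\<^sub>i\<close> permutes them; it preserves \<open>\<sim>\<close>, because a word \<open>\<^bold>s\<close> witnessing
  \<open>\<^bold>u \<sim> \<^bold>v\<close> with \<open>\<rho>\<^bsub>\<^bold>u\<^bold>s\<^esub> = id\<close> is carried to a witness for \<open>\<delta>\<^sub>i(\<^bold>u) \<sim> \<delta>\<^sub>i(\<^bold>v)\<close>,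
  and by finiteness it reflects \<open>\<sim>\<close> as well. As \<open>\<delta>\<^sub>i\<close> also preserves and reflects prefixes, it
  maps the classes meeting \<open>\<^bold>u\<close>-prefixed stems bijectively onto those meeting
  \<open>\<delta>\<^sub>i(\<^bold>u)\<close>-prefixed stems.\<close>

lemma inj_endo_rel_reflect:
  assumes "finite R" and "inj f" and "\<And>a b. (a, b) \<in> R \<Longrightarrow> (f a, f b) \<in> R"
  shows "(f a, f b) \<in> R \<longleftrightarrow> (a, b) \<in> R"
proof
  have inj_pair: "inj (map_prod f f)" using prod.inj_map[OF assms(2) assms(2)] .
  have "map_prod f f ` R = R"
    using assms(1,3) inj_pair by (intro endo_inj_surj) (auto intro: inj_on_subset)
  moreover assume "(f a, f b) \<in> R"
  ultimately obtain a' b' where "(a', b') \<in> R" "(f a', f b') = (f a, f b)" by force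
  with assms(2) show "(a, b) \<in> R" by (auto dest: injD)
qed (rule assms(3))

lemma card_classes_meeting_image:
  assumes inj: "inj f" and perm: "f ` S = S" and R: "R \<subseteq> S \<times> S"
    and reflect: "\<And>a b. (f a, f b) \<in> R \<longleftrightarrow> (a, b) \<in> R"
  shows "card {K \<in> S // R. \<exists>w\<in>K. P (f w)} = card {K \<in> S // R. \<exists>w\<in>K. P w}"
proof -
  have class_image: "f ` (R `` {x}) = R `` {f x}" for x
  proof
    show "R `` {f x} \<subseteq> f ` (R `` {x})"
    proof
      fix z assume z: "z \<in> R `` {f x}"
      then have "z \<in> f ` S" using R perm by blast
      then obtain y where "z = f y" by blast
      with z reflect show "z \<in> f ` (R `` {x})" by blast
    qed
  qed (use reflect in blast)
  have quotient_eq: "S // R = (\<lambda>x. R `` {x}) ` S"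
    unfolding quotient_def by blast
  have "image f ` (S // R) = (\<lambda>x. R `` {f x}) ` S"
    by (simp add: quotient_eq image_image class_image)
  also have "\<dots> = (\<lambda>x. R `` {x}) ` (f ` S)"
    by (simp add: image_image)
  also have "\<dots> = S // R"
    by (simp add: perm quotient_eq)
  finally have quotient_image: "image f ` (S // R) = S // R" .
  have "{K \<in> S // R. \<exists>w\<in>K. P w} = image f ` {K \<in> S // R. \<exists>w\<in>K. P (f w)}"
  proof
    show "{K \<in> S // R. \<exists>w\<in>K. P w} \<subseteq> image f ` {K \<in> S // R. \<exists>w\<in>K. P (f w)}"
    proof
      fix K' assume K': "K' \<in> {K \<in> S // R. \<exists>w\<in>K. P w}"
      then obtain K where "K \<in> S // R" "K' = f ` K" using quotient_image by blast
      with K' show "K' \<in> image f ` {K \<in> S // R. \<exists>w\<in>K. P (f w)}" by blast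
    qed
  next
    show "image f ` {K \<in> S // R. \<exists>w\<in>K. P (f w)} \<subseteq> {K \<in> S // R. \<exists>w\<in>K. P w}"
      using quotient_image by blast
  qed
  moreover have "inj (image f)" using inj by (simp add: inj_def inj_image_eq_iff)
  ultimately show ?thesis by (simp add: card_image inj_on_subset)
qed

lemma length_deltaQ [simp]: "length (deltaQ delta rho i w) = length w"
  by (induction w arbitrary: i) auto

lemma length_rhoS [simp]: "length (rhoS delta rho x t) = length t"
  by (induction t arbitrary: x) auto

lemma deltaQ_append:
  "deltaQ delta rho i (v @ w) = deltaQ delta rho i v @ deltaQ delta rho (hd (rhoQ delta rho v [i])) w"
  by (induction v arbitrary: i) auto

lemma rhoQ_Cons:
  "rhoQ delta rho w (i # t) = hd (rhoQ delta rho w [i]) # rhoQ delta rho (deltaQ delta rho i w) t"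
proof (induction w arbitrary: i t)
  case (Cons x w)
  have "rhoQ delta rho (x # w) (i # t) = rhoQ delta rho w (rho x i # rhoS delta rho (delta i x) t)"
    by simp
  also have "\<dots> = hd (rhoQ delta rho w [rho x i])
      # rhoQ delta rho (deltaQ delta rho (rho x i) w) (rhoS delta rho (delta i x) t)"
    by (rule Cons.IH)
  finally show ?case by simp
qed simp

lemma take_deltaQ: "take k (deltaQ delta rho i w) = deltaQ delta rho i (take k w)"
  by (induction w arbitrary: i k) (auto simp: take_Cons split: nat.splits)

lemma deltaQ_append_rhoQ_id:
  assumes "\<forall>t. rhoQ delta rho v t = t"
  shows "deltaQ delta rho i (v @ w) = deltaQ delta rho i v @ deltaQ delta rho i w"
  using assms by (simp add: deltaQ_append)

lemma rhoQ_deltaQ_id: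
  assumes "\<forall>t. rhoQ delta rho v t = t"
  shows "\<forall>t. rhoQ delta rho (deltaQ delta rho i v) t = t"
  using assms rhoQ_Cons[of delta rho v i] by simp

lemma inj_deltaQ:
  assumes "reversible delta"
  shows "inj (deltaQ delta rho i)"
proof (rule injI)
  fix v w show "deltaQ delta rho i v = deltaQ delta rho i w \<Longrightarrow> v = w"
  proof (induction v arbitrary: w i)
    case Nil then show ?case by (cases w) auto
  next
    case (Cons x v)
    then obtain y w' where w: "w = y # w'" by (cases w) auto
    with Cons.prems have "delta i x = delta i y" by simp
    with assms have "x = y" unfolding reversible_def by (meson bij_def injD)
    with Cons w show ?case by auto
  qed
qed

lemma prefix_deltaQ_iff:
  assumes "reversible delta"
  shows "prefix (deltaQ delta rho i v) (deltaQ delta rho i w) \<longleftrightarrow> prefix v w"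
proof
  assume "prefix (deltaQ delta rho i v) (deltaQ delta rho i w)"
  then have "deltaQ delta rho i (take (length v) w) = deltaQ delta rho i v"
    by (metis length_deltaQ prefix_def append_eq_conv_conj take_deltaQ)
  then have "take (length v) w = v" using inj_deltaQ[OF assms] by (meson injD)
  then show "prefix v w" by (metis take_is_prefix)
qed (auto simp: prefix_def deltaQ_append)

definition orbit_step :: "('a \<Rightarrow> 'q \<Rightarrow> 'q) \<Rightarrow> ('q \<Rightarrow> 'a \<Rightarrow> 'a) \<Rightarrow> 'q list rel" where
  "orbit_step delta rho = {(v, deltaQ delta rho i v) | v i. True}"

lemma comp_orbit_step:
  "Defs.comp delta rho u = {w. (u, w) \<in> (orbit_step delta rho \<union> (orbit_step delta rho)\<inverse>)\<^sup>*}"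
  unfolding Defs.comp_def orbit_step_def by (simp add: Let_def)

lemma self_in_comp: "u \<in> Defs.comp delta rho u"
  unfolding comp_orbit_step by simp

lemma deltaQ_in_comp: "w \<in> Defs.comp delta rho u \<Longrightarrow> deltaQ delta rho i w \<in> Defs.comp delta rho u"
  unfolding comp_orbit_step orbit_step_def mem_Collect_eq by (erule rtrancl_into_rtrancl) blast

lemma comp_eqI: "w \<in> Defs.comp delta rho u \<Longrightarrow> Defs.comp delta rho w = Defs.comp delta rho u"
  unfolding comp_orbit_step
  by (auto intro: rtrancl_trans dest: symD[OF sym_rtrancl[OF sym_Un_converse]])

lemma comp_deltaQ: "Defs.comp delta rho (deltaQ delta rho i u) = Defs.comp delta rho u"
  by (intro comp_eqI deltaQ_in_comp self_in_comp)

lemma length_comp: "w \<in> Defs.comp delta rho u \<Longrightarrow> length w = length u"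
  unfolding comp_orbit_step mem_Collect_eq
  by (induction rule: rtrancl_induct) (auto simp: orbit_step_def)

lemma finite_comp: "finite (Defs.comp delta rho (u :: 'q::finite list))"
proof -
  have "finite {w :: 'q list. set w \<subseteq> UNIV \<and> length w = length u}"
    by (rule finite_lists_length_eq) simp
  then show ?thesis by (rule finite_subset[rotated]) (auto dest: length_comp)
qed

lemma jword_deltaQ: "jword delta rho e w \<Longrightarrow> jword delta rho e (deltaQ delta rho i w)"
  unfolding jword_def by (simp add: take_deltaQ comp_deltaQ)

lemma stem_sim_deltaQ:
  assumes stems: "stems e = Defs.comp delta rho z" and "(v, w) \<in> stem_sim delta rho e"
  shows "(deltaQ delta rho i v, deltaQ delta rho i w) \<in> stem_sim delta rho e"
proof -
  from assms(2) obtain s where vw: "v \<in> stems e" "w \<in> stems e"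
    and jw: "jword delta rho e (v @ s @ w)" and id: "\<forall>t. rhoQ delta rho (v @ s) t = t"
    unfolding stem_sim_def by blast
  define s' where "s' = deltaQ delta rho (hd (rhoQ delta rho v [i])) s"
  have split: "deltaQ delta rho i (v @ s) = deltaQ delta rho i v @ s'"
    unfolding s'_def by (rule deltaQ_append)
  have eq: "deltaQ delta rho i (v @ s @ w) = deltaQ delta rho i v @ s' @ deltaQ delta rho i w"
    using deltaQ_append_rhoQ_id[OF id, of i w] unfolding split by simp
  have "jword delta rho e (deltaQ delta rho i v @ s' @ deltaQ delta rho i w)"
    using jword_deltaQ[OF jw, of i] unfolding eq .
  moreover have "\<forall>t. rhoQ delta rho (deltaQ delta rho i v @ s') t = t"
    using rhoQ_deltaQ_id[OF id, of i] unfolding split .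
  moreover have "deltaQ delta rho i v \<in> stems e" "deltaQ delta rho i w \<in> stems e"
    using vw unfolding stems by (auto intro: deltaQ_in_comp)
  ultimately show ?thesis unfolding stem_sim_def by blast
qed

lemma num_classes_deltaQ:
  fixes delta :: "'a \<Rightarrow> 'q::finite \<Rightarrow> 'q"
  assumes rev: "reversible delta" and stems: "stems e = Defs.comp delta rho z"
  shows "num_classes delta rho e (deltaQ delta rho i u) = num_classes delta rho e u"
proof -
  let ?D = "deltaQ delta rho i" and ?R = "stem_sim delta rho e" and ?S = "stems e"
  have inj: "inj ?D" using rev by (rule inj_deltaQ)
  have perm: "?D ` ?S = ?S"
    unfolding stems using inj finite_comp deltaQ_in_comp
    by (intro endo_inj_surj) (auto intro: inj_on_subset)
  have R: "?R \<subseteq> ?S \<times> ?S" unfolding stem_sim_def by blast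
  have "finite ?R"
    using R finite_comp stems by (metis finite_SigmaI finite_subset)
  then have reflect: "(?D a, ?D b) \<in> ?R \<longleftrightarrow> (a, b) \<in> ?R" for a b
    using inj stem_sim_deltaQ[OF stems] by (rule inj_endo_rel_reflect)
  have "card {K \<in> ?S // ?R. \<exists>w\<in>K. prefix (?D u) (?D w)} = card {K \<in> ?S // ?R. \<exists>w\<in>K. prefix (?D u) w}"
    using inj perm R reflect by (rule card_classes_meeting_image)
  then show ?thesis unfolding num_classes_def prefix_deltaQ_iff[OF rev] by simp
qed

lemma num_classes_comp:
  fixes delta :: "'a \<Rightarrow> 'q::finite \<Rightarrow> 'q"
  assumes rev: "reversible delta" and stems: "stems e = Defs.comp delta rho z"
    and "w \<in> Defs.comp delta rho u"
  shows "num_classes delta rho e w = num_classes delta rho e u"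
proof -
  have "(u, w) \<in> (orbit_step delta rho \<union> (orbit_step delta rho)\<inverse>)\<^sup>*"
    using assms(3) unfolding comp_orbit_step by blast
  then show ?thesis
    by (induction rule: rtrancl_induct)
      (auto simp: orbit_step_def num_classes_deltaQ[OF rev stems])
qed

lemma tree_edge_level:
  assumes "tree_edge delta rho f" and "\<forall>v\<in>fst f. length v = j" and "w \<in> snd f"
  shows "length w = Suc j"
proof -
  obtain u x where f: "f = (Defs.comp delta rho u, Defs.comp delta rho (u @ [x]))"
    using assms(1) unfolding tree_edge_def by blast
  then have "length u = j" using assms(2) self_in_comp by fastforce
  with assms(3) f show ?thesis by (auto dest: length_comp)
qed

lemma initial_path_level:
  assumes ip: "initial_path delta rho e" and "j < length e"
  shows "\<forall>v\<in>fst (e ! j). length v = j"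
  using assms(2)
proof (induction j)
  case 0
  from ip have "e \<noteq> []" and "fst (hd e) = {[]}" unfolding initial_path_def path_in_def by auto
  then show ?case by (simp add: hd_conv_nth)
next
  case (Suc j)
  have "fst (e ! Suc j) = snd (e ! j)" and "tree_edge delta rho (e ! j)"
    using ip Suc.prems unfolding initial_path_def path_in_def by auto
  with Suc show ?case by (auto intro: tree_edge_level)
qed

lemma initial_path_stems_length:
  assumes ip: "initial_path delta rho e" and "w \<in> stems e"
  shows "length w = length e"
proof -
  have ne: "e \<noteq> []" using ip unfolding initial_path_def path_in_def by blast
  then have last: "last e = e ! (length e - 1)" by (simp add: last_conv_nth)
  have "tree_edge delta rho (last e)" using ip ne unfolding initial_path_def path_in_def by simp
  then show ?thesis
    using tree_edge_level initial_path_level[OF ip] assms(2) ne unfolding stems_def last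
    by (metis Suc_diff_1 diff_less length_greater_0_conv zero_less_one)
qed

text \<open>Below the trunk length a \<open>\<mathfrak>j\<close>-word cannot yet reach the stems, so each of its edges is a
  trunk edge, namely the one of its level.\<close>

lemma jword_prefix_comp_trunk:
  assumes jt: "jungle_trunk delta rho e n" and jw: "jword delta rho e u"
    and k: "k < length u" and un: "length u < n"
  shows "Defs.comp delta rho (take (Suc k) u) = snd (e ! k)"
proof -
  have ip: "initial_path delta rho e" and le: "length e = n"
    using jt unfolding jungle_trunk_def by auto
  let ?f = "(Defs.comp delta rho (take k u), Defs.comp delta rho (take (Suc k) u))"
  have "?f \<notin> jungle_edges delta rho e - set e"
  proof
    assume "?f \<in> jungle_edges delta rho e - set e"
    then obtain w v where "w \<in> fst ?f" "v \<in> stems e" "prefix v w"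
      unfolding jungle_edges_def stems_def by auto
    then have "n \<le> k"
      using initial_path_stems_length[OF ip] le length_comp prefix_length_le k by fastforce
    with k un show False by simp
  qed
  moreover have "?f \<in> jungle_edges delta rho e" using jw k unfolding jword_def by blast
  ultimately obtain j where j: "j < length e" "?f = e ! j" by (metis DiffI in_set_conv_nth)
  have "take k u \<in> fst (e ! j)" using j(2) self_in_comp by (metis fst_conv)
  then have "length (take k u) = j" using initial_path_level[OF ip j(1)] by blast
  with k have "j = k" by simp
  with j show ?thesis by (metis snd_conv)
qed

lemma jword_comp_eq:
  assumes jt: "jungle_trunk delta rho e n" and jw: "jword delta rho e u" "jword delta rho e u'"
    and un: "length u < n" and l: "length u' = length u"
  shows "Defs.comp delta rho u' = Defs.comp delta rho u"
proof (cases u)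
  case Nil then show ?thesis using l by simp
next
  case (Cons x v)
  let ?k = "length u - 1"
  have "Suc ?k = length u" using Cons by simp
  then show ?thesis
    using jword_prefix_comp_trunk[OF jt jw(1), of ?k] jword_prefix_comp_trunk[OF jt jw(2), of ?k]
      l un by simp
qed

theorem corollary5p18:
  fixes delta :: "'a::finite \<Rightarrow> 'q::finite \<Rightarrow> 'q"
    and rho :: "'q \<Rightarrow> 'a \<Rightarrow> 'a"
    and e :: "'q edge list" and n :: nat and u u' :: "'q list"
  assumes "connected_aut delta"
    and "bireversible delta rho"
    and "no_active_self_liftable_branch delta rho"
    and "jungle_trunk delta rho e n"
    and "jword delta rho e u" and "jword delta rho e u'"
    and "length u < n" and "length u' = length u"
  shows "num_classes delta rho e u = num_classes delta rho e u'"
proof -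
  have rev: "reversible delta" using assms(2) unfolding bireversible_def by blast
  have ip: "initial_path delta rho e" using assms(4) unfolding jungle_trunk_def by blast
  then have "tree_edge delta rho (last e)" unfolding initial_path_def path_in_def by simp
  then obtain z where stems: "stems e = Defs.comp delta rho z"
    unfolding tree_edge_def stems_def by auto
  have "u' \<in> Defs.comp delta rho u" using jword_comp_eq[OF assms(4-8)] self_in_comp by metis
  then show ?thesis using num_classes_comp[OF rev stems] by metis
qed

end
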